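(* Let $n\ge 2$ be odd. Then there exists no matching mechanism that is resolute, symmetric (i.e. $G^*$-symmetric) and minimally optimal.
   Context: Fix $n\ge 2$, $W=\{1,\dots,n\}$ (women), $M=\{n+1,\dots,2n\}$ (men), $I=W\cup M$. Permutations compose right-to-left. A preference profile is a function $p$ on $I$ assigning to each $x\in W$ a linear order $p(x)$ on $M$ and to each $y\in M$ a linear order $p(y)$ on $W$; $\mathcal{P}$ is the set of preference profiles. For a linear order $R$ on a set $X$ and $a\in X$, $\mathrm{Rank}_R(a)=|\{b\in X: b\succeq_R a\}|$. A matching is a permutation $\mu$ of $I$ with $\mu(W)=M$, $\mu(M)=W$ and $\mu(\mu(z))=z$ for all $z\in I$; $\mathcal{M}$ is the set of matchings. $\mu$ is minimally optimal for $p$ if there is $z\in I$ with $\mathrm{Rank}_{p(z)}(\mu(z))<n$. Let $G^*=\{\varphi\in\mathrm{Sym}(I):\{\varphi(W),\varphi(M)\}=\{W,M\}\}$. For a linear order $R$ on $X\subseteq I$ and $\varphi\in\mathrm{Sym}(I)$, $\varphi R$ is the relation on $\varphi(X)$ with $(a,b)\in\varphi R$ iff $(\varphi^{-1}(a),\varphi^{-1}(b))\in R$. For $p\in\mathcal{P}$, $\varphi\in G^*$, $p^\varphi(z)=\varphi\,p(\varphi^{-1}(z))$. For a permutation $\mu$, $\mu^\varphi=\varphi\mu\varphi^{-1}$; $S^\varphi=\{\mu^\varphi:\mu\in S\}$. A matching mechanism is a correspondence $F$ from $\mathcal{P}$ to $\mathcal{M}$; it is resolute if $|F(p)|=1$ for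 all $p$; minimally optimal if every $\mu\in F(p)$ is minimally optimal for $p$, for all $p$; symmetric if $F(p^\varphi)=F(p)^\varphi$ for all $p\in\mathcal{P}$, $\varphi\in G^*$. *)

theory Defs
  imports Main "HOL-Combinatorics.Permutations"
begin

type_synonym profile = "nat \<Rightarrow> nat rel"
type_synonym perm = "nat \<Rightarrow> nat"

definition women :: "nat \<Rightarrow> nat set" where "women n = {1..n}"
definition men :: "nat \<Rightarrow> nat set" where "men n = {n+1..2*n}"
definition agents :: "nat \<Rightarrow> nat set" where "agents n = women n \<union> men n"

text \<open>Convention: (a,b) in R means a is weakly preferred to b (a is at least as good as b).\<close>
definition Rank :: "nat rel \<Rightarrow> nat \<Rightarrow> nat" where
  "Rank R a = card {b. (b, a) \<in> R}"

definition profiles :: "nat \<Rightarrow> profile set" where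
  "profiles n = {p. (\<forall>x\<in>women n. linear_order_on (men n) (p x))
                  \<and> (\<forall>y\<in>men n. linear_order_on (women n) (p y))
                  \<and> (\<forall>z. z \<notin> agents n \<longrightarrow> p z = {})}"

definition matchings :: "nat \<Rightarrow> perm set" where
  "matchings n = {\<mu>. \<mu> permutes agents n \<and> \<mu> ` women n = men n \<and> \<mu> ` men n = women n
                     \<and> (\<forall>z\<in>agents n. \<mu> (\<mu> z) = z)}"

definition min_optimal_matching :: "nat \<Rightarrow> profile \<Rightarrow> perm \<Rightarrow> bool" where
  "min_optimal_matching n p \<mu> \<longleftrightarrow> (\<exists>z\<in>agents n. Rank (p z) (\<mu> z) < n)"

definition Gstar :: "nat \<Rightarrow> perm set" where
  "Gstar n = {\<phi>. \<phi> permutes agents n \<and> {\<phi> ` women n, \<phi> ` men n} = {women n, men n}}"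

definition rel_act :: "perm \<Rightarrow> nat rel \<Rightarrow> nat rel" where
  "rel_act \<phi> R = {(a, b). (inv \<phi> a, inv \<phi> b) \<in> R}"

definition profile_act :: "profile \<Rightarrow> perm \<Rightarrow> profile" where
  "profile_act p \<phi> = (\<lambda>z. rel_act \<phi> (p (inv \<phi> z)))"

definition perm_conj :: "perm \<Rightarrow> perm \<Rightarrow> perm" where
  "perm_conj \<mu> \<phi> = \<phi> \<circ> \<mu> \<circ> inv \<phi>"

definition mechanism :: "nat \<Rightarrow> (profile \<Rightarrow> perm set) \<Rightarrow> bool" where
  "mechanism n F \<longleftrightarrow> (\<forall>p\<in>profiles n. F p \<subseteq> matchings n)"

definition resolute :: "nat \<Rightarrow> (profile \<Rightarrow> perm set) \<Rightarrow> bool" where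
  "resolute n F \<longleftrightarrow> (\<forall>p\<in>profiles n. card (F p) = 1)"

definition minimally_optimal :: "nat \<Rightarrow> (profile \<Rightarrow> perm set) \<Rightarrow> bool" where
  "minimally_optimal n F \<longleftrightarrow> (\<forall>p\<in>profiles n. \<forall>\<mu>\<in>F p. min_optimal_matching n p \<mu>)"

definition symmetric_mech :: "nat \<Rightarrow> (profile \<Rightarrow> perm set) \<Rightarrow> bool" where
  "symmetric_mech n F \<longleftrightarrow>
     (\<forall>p\<in>profiles n. \<forall>\<phi>\<in>Gstar n. F (profile_act p \<phi>) = (\<lambda>\<mu>. perm_conj \<mu> \<phi>) ` F p)"

end

theory Submission
  imports Defs
begin

(* Seat the n women and n men alternately at a round table with 2n seats, and let every agent
   rank the agents of the other sex clockwise, starting just past the seat opposite to them and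
   ending with the agent sitting directly opposite, who is of the other sex because n is odd.
   Turning the table by one seat lies in G* and fixes this profile, so a resolute symmetric
   mechanism must choose a matching that commutes with the turn.  Such a matching shifts every
   seat by the same k; being an involution that sends women to men forces k = n, so everybody
   is matched to their last choice. *)

lemma linear_order_on_key:
  fixes f :: "'a \<Rightarrow> 'b::linorder"
  assumes "inj_on f A"
  shows "linear_order_on A {(a, b). a \<in> A \<and> b \<in> A \<and> f a \<le> f b}"
  using assms
  unfolding linear_order_on_def partial_order_on_def preorder_on_def refl_on_def trans_def
    antisym_def total_on_def
  by (auto dest: inj_onD)

lemma permutes_image_swap:
  assumes "f permutes A" "B \<subseteq> A" "\<And>z. z \<in> A \<Longrightarrow> f z \<in> B \<longleftrightarrow> z \<notin> B"
  shows "f ` B = A - B" "f ` (A - B) = B"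
proof -
  have partition: "X = A - B \<and> Y = B" if "X \<subseteq> A - B" "Y \<subseteq> B" "X \<union> Y = A" for X Y
    using that assms(2) by blast
  have "f ` B \<subseteq> A - B"
    using assms(2,3) by (auto simp: permutes_in_image[OF assms(1)])
  moreover have "f ` (A - B) \<subseteq> B"
    using assms(3) by auto
  moreover have "f ` B \<union> f ` (A - B) = A"
    using assms(2) by (simp flip: image_Un add: Un_absorb1 permutes_image[OF assms(1)])
  ultimately have "f ` B = A - B \<and> f ` (A - B) = B" by (rule partition)
  then show "f ` B = A - B" "f ` (A - B) = B" by (simp_all only:)
qed

lemma profile_act_eq_if_equivariant:
  assumes "bij \<phi>" "\<And>x a b. (\<phi> a, \<phi> b) \<in> p (\<phi> x) \<longleftrightarrow> (a, b) \<in> p x"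
  shows "profile_act p \<phi> = p"
proof -
  have "(a, b) \<in> profile_act p \<phi> z \<longleftrightarrow> (a, b) \<in> p z" for a b z
    using assms(2)[of "inv \<phi> a" "inv \<phi> b" "inv \<phi> z"]
    by (simp add: profile_act_def rel_act_def surj_f_inv_f[OF bij_is_surj[OF assms(1)]])
  then show ?thesis by auto
qed

lemma symmetric_mech_fixed_profile_commutes:
  assumes "symmetric_mech n F" "p \<in> profiles n" "\<phi> \<in> Gstar n" "profile_act p \<phi> = p"
    and "F p = {\<mu>}"
  shows "\<mu> \<circ> \<phi> = \<phi> \<circ> \<mu>"
proof -
  have "F (profile_act p \<phi>) = (\<lambda>\<mu>. perm_conj \<mu> \<phi>) ` F p"
    using assms(1-3) by (simp add: symmetric_mech_def)
  then have "\<mu> = perm_conj \<mu> \<phi>" using assms(4,5) by simp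
  then have "\<mu> = \<phi> \<circ> \<mu> \<circ> inv \<phi>" by (simp add: perm_conj_def)
  moreover have "inv \<phi> \<circ> \<phi> = id"
    using assms(3) unfolding Gstar_def by (blast intro: permutes_inv_o(2))
  ultimately show ?thesis by (metis comp_assoc comp_id)
qed

(* Seat 2(i-1) holds woman i and seat 2(i-1)+1 holds man n+i; seats are read modulo 2n. *)
definition seat :: "nat \<Rightarrow> nat \<Rightarrow> nat" where
  "seat n j = (let r = j mod (2*n) in if even r then r div 2 + 1 else n + r div 2 + 1)"

definition seat_index :: "nat \<Rightarrow> nat \<Rightarrow> nat" where
  "seat_index n z = (if z \<le> n then 2*(z-1) else 2*(z-n-1)+1)"

lemma seat_mod [simp]: "seat n (j mod (2*n)) = seat n j"
  by (simp add: seat_def)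

lemma seat_add_period [simp]: "seat n (j + 2*n) = seat n j"
  by (metis seat_mod mod_add_self2)

lemma
  assumes "n \<ge> 1"
  shows seat_in_agents: "seat n j \<in> agents n"
    and seat_in_women_iff: "seat n j \<in> women n \<longleftrightarrow> even j"
    and seat_index_seat [simp]: "seat_index n (seat n j) = j mod (2*n)"
proof -
  define r where "r = j mod (2*n)"
  have "r < 2*n" using assms by (simp add: r_def)
  moreover have "even r \<longleftrightarrow> even j" by (simp add: r_def dvd_mod_iff)
  ultimately show "seat n j \<in> agents n" "seat n j \<in> women n \<longleftrightarrow> even j"
    "seat_index n (seat n j) = j mod (2*n)"
    by (auto simp: seat_def r_def[symmetric] Let_def agents_def women_def men_def seat_index_def
        elim!: evenE oddE)
qed

lemma
  assumes "z \<in> agents n"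
  shows seat_index_less: "seat_index n z < 2*n"
    and seat_seat_index [simp]: "seat n (seat_index n z) = z"
  using assms by (auto simp: agents_def women_def men_def seat_index_def seat_def)

definition rotation :: "nat \<Rightarrow> perm" where
  "rotation n z = (if z \<in> agents n then seat n (Suc (seat_index n z)) else z)"

lemma rotation_seat: "n \<ge> 1 \<Longrightarrow> rotation n (seat n j) = seat n (Suc j)"
  by (simp add: rotation_def seat_in_agents) (metis seat_mod mod_Suc_eq)

lemma finite_agents: "finite (agents n)"
  by (simp add: agents_def women_def men_def)

lemma rotation_permutes:
  assumes "n \<ge> 1"
  shows "rotation n permutes agents n"
proof (rule bij_imp_permutes)
  have "rotation n ` agents n = agents n"
  proof
    show "rotation n ` agents n \<subseteq> agents n"
      using assms by (auto simp: rotation_def seat_in_agents)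
    show "agents n \<subseteq> rotation n ` agents n"
    proof
      fix z assume "z \<in> agents n"
      then have "z = rotation n (seat n (seat_index n z + (2*n - 1)))"
        using assms by (simp add: rotation_seat)
      then show "z \<in> rotation n ` agents n" using seat_in_agents[OF assms] by blast
    qed
  qed
  then show "bij_betw (rotation n) (agents n) (agents n)"
    by (simp add: bij_betw_def eq_card_imp_inj_on finite_agents)
  show "z \<notin> agents n \<Longrightarrow> rotation n z = z" for z
    by (simp add: rotation_def)
qed

lemma rotation_in_women_iff:
  assumes "n \<ge> 1" "z \<in> agents n"
  shows "rotation n z \<in> women n \<longleftrightarrow> z \<notin> women n"
  using assms by (metis seat_seat_index rotation_seat seat_in_women_iff even_Suc)

lemma rotation_in_Gstar:
  assumes n: "n \<ge> 1"
  shows "rotation n \<in> Gstar n"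
proof -
  have "men n = agents n - women n" "women n \<subseteq> agents n"
    by (auto simp: agents_def women_def men_def)
  then have "rotation n ` women n = men n" "rotation n ` men n = women n"
    using permutes_image_swap[OF rotation_permutes[OF n]] rotation_in_women_iff[OF n] by auto
  then show ?thesis
    using rotation_permutes[OF n] by (simp add: Gstar_def insert_commute)
qed

definition opposite :: "nat \<Rightarrow> nat \<Rightarrow> nat set" where
  "opposite n x = (if x \<in> women n then men n else women n)"

(* The clockwise distance from x to y, shifted so that the agent opposite x gets the largest key. *)
definition pref_key :: "nat \<Rightarrow> nat \<Rightarrow> nat \<Rightarrow> int" where
  "pref_key n x y = (int (seat_index n y) - int (seat_index n x) + (int n - 1)) mod int (2*n)"

definition round_table_profile :: "nat \<Rightarrow> profile" where
  "round_table_profile n x =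
     (if x \<in> agents n
      then {(y, y'). y \<in> opposite n x \<and> y' \<in> opposite n x \<and> pref_key n x y \<le> pref_key n x y'}
      else {})"

lemma opposite_subset_agents: "opposite n x \<subseteq> agents n"
  by (auto simp: opposite_def agents_def)

lemma in_opposite_iff:
  "y \<in> agents n \<Longrightarrow> y \<in> opposite n x \<longleftrightarrow> (y \<in> women n \<longleftrightarrow> x \<notin> women n)"
  by (auto simp: opposite_def agents_def women_def men_def)

lemma pref_key_seat:
  assumes "n \<ge> 1"
  shows "pref_key n (seat n i) (seat n j) = (int j - int i + (int n - 1)) mod int (2*n)"
proof -
  have "((a::int) mod m - b mod m + c) mod m = (a - b + c) mod m" for a b c m
    by (metis mod_diff_eq mod_add_left_eq)
  then show ?thesis using assms by (simp add: pref_key_def of_nat_mod)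
qed

lemma inj_on_pref_key:
  assumes "n \<ge> 1"
  shows "inj_on (pref_key n x) (agents n)"
proof
  fix y y' assume y: "y \<in> agents n" and y': "y' \<in> agents n"
    and key: "pref_key n x y = pref_key n x y'"
  define d where "d = int n - 1 - int (seat_index n x)"
  have "pref_key n x v = (int (seat_index n v) + d) mod int (2*n)" for v
    by (simp add: pref_key_def d_def algebra_simps)
  with key have "(int (seat_index n y) + d) mod int (2*n)
      = (int (seat_index n y') + d) mod int (2*n)"
    by simp
  then have "(int (seat_index n y) + d + - d) mod int (2*n)
      = (int (seat_index n y') + d + - d) mod int (2*n)"
    by (rule mod_add_cong) (rule refl)
  then have "seat_index n y = seat_index n y'"
    using seat_index_less[OF y] seat_index_less[OF y'] by (simp flip: of_nat_mod)
  then show "y = y'" by (metis seat_seat_index y y')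
qed

lemma round_table_profile_in_profiles:
  assumes "n \<ge> 1"
  shows "round_table_profile n \<in> profiles n"
proof -
  have linear: "linear_order_on (opposite n x) (round_table_profile n x)" if "x \<in> agents n" for x
  proof -
    have "inj_on (pref_key n x) (opposite n x)"
      using inj_on_pref_key[OF assms] opposite_subset_agents by (rule inj_on_subset)
    then show ?thesis
      using that linear_order_on_key by (simp add: round_table_profile_def)
  qed
  have "linear_order_on (men n) (round_table_profile n x)" if "x \<in> women n" for x
    using linear[of x] that by (simp add: opposite_def agents_def)
  moreover have "linear_order_on (women n) (round_table_profile n x)" if "x \<in> men n" for x
    using linear[of x] that by (auto simp: opposite_def agents_def women_def men_def)
  moreover have "round_table_profile n z = {}" if "z \<notin> agents n" for z
    using that by (simp add: round_table_profile_def)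
  ultimately show ?thesis by (simp add: profiles_def)
qed

lemma pref_key_rotation:
  assumes "n \<ge> 1" "x \<in> agents n" "y \<in> agents n"
  shows "pref_key n (rotation n x) (rotation n y) = pref_key n x y"
  using pref_key_seat[OF assms(1), of "Suc (seat_index n x)" "Suc (seat_index n y)"]
    pref_key_seat[OF assms(1), of "seat_index n x" "seat_index n y"]
  by (simp add: rotation_def assms(2,3))

lemma round_table_profile_rotation:
  assumes "n \<ge> 1"
  shows "(rotation n a, rotation n b) \<in> round_table_profile n (rotation n x)
         \<longleftrightarrow> (a, b) \<in> round_table_profile n x"
proof (cases "a \<in> agents n \<and> b \<in> agents n \<and> x \<in> agents n")
  case True
  then show ?thesis
    using assms rotation_permutes[OF assms] opposite_subset_agents
    by (auto simp: round_table_profile_def pref_key_rotation permutes_in_image in_opposite_iff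
        rotation_in_women_iff)
next
  case False
  then show ?thesis
    by (auto simp: round_table_profile_def permutes_in_image[OF rotation_permutes[OF assms]]
        dest!: opposite_subset_agents[THEN subsetD])
qed

lemma round_table_profile_rotation_invariant:
  assumes "n \<ge> 1"
  shows "profile_act (round_table_profile n) (rotation n) = round_table_profile n"
  using permutes_bij[OF rotation_permutes[OF assms]] round_table_profile_rotation[OF assms]
  by (rule profile_act_eq_if_equivariant)

lemma shift_if_commutes_with_rotation:
  assumes "n \<ge> 1" "f \<circ> rotation n = rotation n \<circ> f" "f (seat n 0) = seat n k"
  shows "f (seat n j) = seat n (j + k)"
proof (induction j)
  case 0
  then show ?case using assms(3) by simp
next
  case (Suc j)
  have "f (seat n (Suc j)) = f (rotation n (seat n j))"
    using assms(1) by (simp add: rotation_seat)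
  also have "\<dots> = rotation n (seat n (j + k))"
    using assms(2) Suc.IH by (metis comp_apply)
  also have "\<dots> = seat n (Suc j + k)"
    using assms(1) by (simp add: rotation_seat)
  finally show ?case .
qed

definition antipode :: "nat \<Rightarrow> nat \<Rightarrow> nat" where
  "antipode n z = seat n (seat_index n z + n)"

lemma half_turn_unique:
  assumes "(k::nat) < 2*n" "odd k" "(k + k) mod (2*n) = 0"
  shows "k = n"
proof -
  have "n dvd k" using assms(3) by (simp add: mod_eq_0_iff_dvd flip: mult_2)
  then obtain q where q: "k = n * q" by blast
  with assms(1) have "q < 2" by (metis mult.commute mult_less_cancel1)
  moreover have "q \<noteq> 0" using q assms(2) by (metis even_zero mult_0_right)
  ultimately show "k = n" using q by (cases q) auto
qed

lemma matching_commuting_with_rotation_eq_antipode: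
  assumes n: "n \<ge> 1" and \<mu>: "\<mu> \<in> matchings n" and comm: "\<mu> \<circ> rotation n = rotation n \<circ> \<mu>"
    and z: "z \<in> agents n"
  shows "\<mu> z = antipode n z"
proof -
  define k where "k = seat_index n (\<mu> (seat n 0))"
  have "\<mu> permutes agents n" using \<mu> by (simp add: matchings_def)
  then have "\<mu> (seat n 0) \<in> agents n" using seat_in_agents[OF n] by (simp add: permutes_in_image)
  then have k: "k < 2*n" "\<mu> (seat n 0) = seat n k" by (simp_all add: k_def seat_index_less)
  have shift: "\<mu> (seat n j) = seat n (j + k)" for j
    by (rule shift_if_commutes_with_rotation[OF n comm k(2)])
  have "seat n 0 \<in> women n" using seat_in_women_iff[OF n] by simp
  then have "\<mu> (seat n 0) \<in> \<mu> ` women n" by (rule imageI)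
  then have "seat n k \<in> men n" using \<mu> k(2) by (simp add: matchings_def)
  then have "odd k" using seat_in_women_iff[OF n, of k] by (auto simp: women_def men_def)
  moreover have "\<mu> (\<mu> (seat n 0)) = seat n 0"
    using \<mu> seat_in_agents[OF n] by (simp add: matchings_def)
  then have "seat n (k + k) = seat n 0" using shift[of k] k(2) by simp
  then have "(k + k) mod (2*n) = 0" by (metis seat_index_seat[OF n] mod_0)
  ultimately have "k = n" by (rule half_turn_unique[OF k(1)])
  then show ?thesis using shift[of "seat_index n z"] z by (simp add: antipode_def)
qed

lemma rank_antipode:
  assumes n: "n \<ge> 1" and "odd n" and z: "z \<in> agents n"
  shows "Rank (round_table_profile n z) (antipode n z) = n"
proof -
  have "antipode n z \<in> agents n" by (simp add: antipode_def seat_in_agents[OF n])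
  moreover have "antipode n z \<in> women n \<longleftrightarrow> z \<notin> women n"
    using seat_in_women_iff[OF n] seat_in_women_iff[OF n, of "seat_index n z"] z \<open>odd n\<close>
    by (simp add: antipode_def)
  ultimately have opp: "antipode n z \<in> opposite n z" by (simp add: in_opposite_iff)
  have "pref_key n z (antipode n z) = (int n + (int n - 1)) mod int (2*n)"
    using pref_key_seat[OF n, of "seat_index n z" "seat_index n z + n"] z
    by (simp add: antipode_def)
  also have "\<dots> = int (2*n) - 1" using n by (simp add: zmod_minus1)
  finally have "pref_key n z y \<le> pref_key n z (antipode n z)" for y
    using n by (simp add: pref_key_def)
  then have "{y. (y, antipode n z) \<in> round_table_profile n z} = opposite n z"
    using z opp by (auto simp: round_table_profile_def)
  moreover have "card (opposite n z) = n" by (simp add: opposite_def women_def men_def)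
  ultimately show ?thesis by (simp add: Rank_def)
qed

theorem theorem4:
  fixes n :: nat
  assumes "n \<ge> 2" and "odd n"
  shows "\<not> (\<exists>F. mechanism n F \<and> resolute n F \<and> symmetric_mech n F \<and> minimally_optimal n F)"
proof
  assume "\<exists>F. mechanism n F \<and> resolute n F \<and> symmetric_mech n F \<and> minimally_optimal n F"
  then obtain F where mech: "mechanism n F" and res: "resolute n F"
    and sym: "symmetric_mech n F" and opt: "minimally_optimal n F" by blast
  define p where "p = round_table_profile n"
  have n: "n \<ge> 1" using assms(1) by simp
  have p: "p \<in> profiles n" unfolding p_def by (rule round_table_profile_in_profiles[OF n])
  then obtain \<mu> where F: "F p = {\<mu>}" using res by (auto simp: resolute_def card_1_singleton_iff)
  have \<mu>: "\<mu> \<in> matchings n" using mech p F by (auto simp: mechanism_def)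
  have "\<mu> \<circ> rotation n = rotation n \<circ> \<mu>"
    using symmetric_mech_fixed_profile_commutes[OF sym p rotation_in_Gstar[OF n] _ F]
      round_table_profile_rotation_invariant[OF n] by (simp add: p_def)
  then have antipodal: "\<mu> z = antipode n z" if "z \<in> agents n" for z
    using matching_commuting_with_rotation_eq_antipode[OF n \<mu>] that by blast
  have "min_optimal_matching n p \<mu>" using opt p F by (simp add: minimally_optimal_def)
  then obtain z where "z \<in> agents n" "Rank (p z) (\<mu> z) < n"
    by (auto simp: min_optimal_matching_def)
  then show False using antipodal rank_antipode[OF n assms(2)] by (simp add: p_def)
qed

end
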